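(* Let $X$ be a discrete metric space with bounded geometry (balls of radius $r$ have at most $v(r)<\infty$ elements) and let $Y$ be a set. If $A=(a_{y,x})_{(y,x)\in Y\times X}$ is thin-$\emptyset$, then $A^*A$ (when it exists) is banded, i.e. there is $N<\infty$ such that $(A^*A)_{x,x'}=0$ whenever $d(x,x')>N$.
   Context: $A$ is thin-$\emptyset$ if there is $r<\infty$ such that every row $(a_{y,x})_{x\in X}$ has support contained in a ball of radius $r$ in $X$; no condition is imposed on columns. *)

theory Defs
  imports "HOL-Analysis.Analysis"
begin

definition discrete_space :: "'a::metric_space set \<Rightarrow> bool" where
  "discrete_space X \<longleftrightarrow> (\<forall>x\<in>X. \<exists>e>0. ball x e \<inter> X = {x})"

definition bounded_geometry :: "'a::metric_space set \<Rightarrow> bool" where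
  "bounded_geometry X \<longleftrightarrow>
     (\<forall>r::real. \<exists>v::nat. \<forall>x\<in>X. finite (cball x r \<inter> X) \<and> card (cball x r \<inter> X) \<le> v)"

definition thin_empty ::
    "'a::metric_space set \<Rightarrow> 'b set \<Rightarrow> ('b \<Rightarrow> 'a \<Rightarrow> complex) \<Rightarrow> bool" where
  "thin_empty X Y A \<longleftrightarrow>
     (\<exists>r::real. (\<forall>y\<in>Y. \<exists>c\<in>X. {x\<in>X. A y x \<noteq> 0} \<subseteq> cball c r))"

definition adj_mult :: "'b set \<Rightarrow> ('b \<Rightarrow> 'a \<Rightarrow> complex) \<Rightarrow> 'a \<Rightarrow> 'a \<Rightarrow> complex" where
  "adj_mult Y A x x' = infsum (\<lambda>y. cnj (A y x) * A y x') Y"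

definition adj_mult_exists :: "'a set \<Rightarrow> 'b set \<Rightarrow> ('b \<Rightarrow> 'a \<Rightarrow> complex) \<Rightarrow> bool" where
  "adj_mult_exists X Y A \<longleftrightarrow>
     (\<forall>x\<in>X. \<forall>x'\<in>X. (\<lambda>y. cnj (A y x) * A y x') summable_on Y)"

definition banded :: "'a::metric_space set \<Rightarrow> ('a \<Rightarrow> 'a \<Rightarrow> complex) \<Rightarrow> bool" where
  "banded X B \<longleftrightarrow> (\<exists>N::real. \<forall>x\<in>X. \<forall>x'\<in>X. dist x x' > N \<longrightarrow> B x x' = 0)"

end

theory Submission
  imports Defs
begin

text \<open>If every row of \<open>A\<close> is supported in a ball of radius \<open>r\<close>, then no row can be nonzero at
  two points more than \<open>2 r\<close> apart, so every term of the sum defining \<open>(A\<^sup>*A)\<^sub>x\<^sub>,\<^sub>x\<^sub>'\<close> vanishes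
  once \<open>d(x, x') > 2 r\<close>.\<close>

lemma dist_le_of_mem_cball: "x \<in> cball c r \<Longrightarrow> x' \<in> cball c r \<Longrightarrow> dist x x' \<le> 2 * r"
  using dist_triangle3[of x x' c] by simp

lemma cnj_mult_eq_0_if_far:
  fixes a :: "'a::metric_space \<Rightarrow> complex"
  assumes supp: "{x\<in>X. a x \<noteq> 0} \<subseteq> cball c r"
    and "x \<in> X" "x' \<in> X" and far: "dist x x' > 2 * r"
  shows "cnj (a x) * a x' = 0"
proof (rule ccontr)
  assume "cnj (a x) * a x' \<noteq> 0"
  then have "x \<in> cball c r" "x' \<in> cball c r"
    using supp \<open>x \<in> X\<close> \<open>x' \<in> X\<close> by auto
  then show False
    using dist_le_of_mem_cball far by fastforce
qed

theorem proposition3p2: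
  fixes X :: "'a::metric_space set" and Y :: "'b set" and A :: "'b \<Rightarrow> 'a \<Rightarrow> complex"
  assumes "discrete_space X"
    and "bounded_geometry X"
    and "thin_empty X Y A"
    and "adj_mult_exists X Y A"
  shows "banded X (adj_mult Y A)"
proof -
  obtain r where rows: "\<forall>y\<in>Y. \<exists>c\<in>X. {x\<in>X. A y x \<noteq> 0} \<subseteq> cball c r"
    using \<open>thin_empty X Y A\<close> unfolding thin_empty_def by blast
  have "adj_mult Y A x x' = 0"
    if "x \<in> X" "x' \<in> X" "dist x x' > 2 * r" for x x'
  proof -
    have "\<forall>y\<in>Y. cnj (A y x) * A y x' = 0"
      using rows cnj_mult_eq_0_if_far[OF _ that] by blast
    then show ?thesis
      unfolding adj_mult_def by (simp add: infsum_0)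
  qed
  then show ?thesis
    unfolding banded_def by blast
qed

end
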